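(* Consider full-batch Noisy-SGD ($\mathcal{B}_t=\mathcal{B}_t'=[n]$) on adjacent datasets $\mathcal{D},\mathcal{D}'$ with iterates $W_t,W_t'$ and $W_0=W_0'$. Assume $\nabla\ell_i,\nabla\ell_i'$ are $(L,\lambda)$-Hölder continuous on $\mathcal{K}$ for all $i\in[n]$, with $L\ge0$, $\lambda\in(0,1]$. Let $g(x;M)=x+Mx^\lambda$. Then for all $t\ge0$, $$W_\infty(W_t,W_t')\le\min(D_t,D),\qquad D_t=\min\big(g(D_{t-1};\eta L)+2\eta K/n,\ D_{t-1}+2\eta K\big),\quad D_0=0.$$
   Context: Setting (Noisy-SGD). Let $\mathcal{K}\subset\mathbb{R}^d$ be a nonempty closed convex set of diameter $D$, $\Pi_{\mathcal{K}}$ the Euclidean projection. Let $\ell(\cdot;d)$, $d\in\mathcal{X}$, be differentiable losses on $\mathcal{K}$; for $\mathcal{D}=(d_1,\dots,d_n)$ write $\ell_i=\ell(\cdot;d_i)$, and $\ell_i'=\ell(\cdot;d_i')$ for $\mathcal{D}'$. $\Pi_{B_K}(v)=v\min(1,K/\|v\|)$. Noisy-SGD: $W_{t+1}=\Pi_{\mathcal{K}}\big[W_t-\eta\frac1b\sum_{i\in\mathcal{B}_t}\Pi_{B_K}[\nabla\ell_i(W_t)]+G_t\big]$, $G_t$ i.i.d. $N(0,\sigma^2I_d)$; $W_t'$ analogously on $\mathcal{D}'$. Adjacent datasets differ in exactly one index. $(L,\lambda)$-Hölder: $\|f(w)-f(w')\|\le L\|w-w'\|^\lambda$. $W_\infty(\mu,\nu)=\inf_{\gamma\in\Gamma(\mu,\nu)}\operatorname{ess\,sup}_{(X,Y)\sim\gamma}\|X-Y\|$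 over couplings, applied to the laws of $W_t,W_t'$. *)

theory Defs
  imports "HOL-Analysis.Analysis" "HOL-Probability.Probability"
begin

definition clip :: "real \<Rightarrow> 'a::real_normed_vector \<Rightarrow> 'a" where
  "clip Kc v = min 1 (Kc / norm v) *\<^sub>R v"

text \<open>Isotropic Gaussian N(0, sigma^2 I_d) on a Euclidean space: independent
  N(0,sigma^2) coordinates with respect to the orthonormal basis.\<close>
definition gauss :: "real \<Rightarrow> 'a::euclidean_space measure" where
  "gauss \<sigma> = distr (PiM Basis (\<lambda>_. density lborel (normal_density 0 \<sigma>))) borel
                   (\<lambda>x. \<Sum>b\<in>Basis. x b *\<^sub>R b)"

definition sgd_step :: "'a::euclidean_space set \<Rightarrow> ('x \<Rightarrow> 'a \<Rightarrow> 'a) \<Rightarrow> nat \<Rightarrow> (nat \<Rightarrow> 'x)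
    \<Rightarrow> real \<Rightarrow> real \<Rightarrow> 'a \<Rightarrow> 'a \<Rightarrow> 'a" where
  "sgd_step K grad n data \<eta> Kc w g =
     closest_point K (w - \<eta> *\<^sub>R ((1 / real n) *\<^sub>R (\<Sum>i<n. clip Kc (grad (data i) w))) + g)"

text \<open>Iterates as functions of the noise sequence omega (omega t = G_t).\<close>
primrec sgd_iter :: "'a::euclidean_space set \<Rightarrow> ('x \<Rightarrow> 'a \<Rightarrow> 'a) \<Rightarrow> nat \<Rightarrow> (nat \<Rightarrow> 'x)
    \<Rightarrow> real \<Rightarrow> real \<Rightarrow> 'a \<Rightarrow> nat \<Rightarrow> (nat \<Rightarrow> 'a) \<Rightarrow> 'a" where
  "sgd_iter K grad n data \<eta> Kc w0 0 \<omega> = w0"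
| "sgd_iter K grad n data \<eta> Kc w0 (Suc t) \<omega> =
     sgd_step K grad n data \<eta> Kc (sgd_iter K grad n data \<eta> Kc w0 t \<omega>) (\<omega> t)"

definition sgd_law :: "'a::euclidean_space set \<Rightarrow> ('x \<Rightarrow> 'a \<Rightarrow> 'a) \<Rightarrow> nat \<Rightarrow> (nat \<Rightarrow> 'x)
    \<Rightarrow> real \<Rightarrow> real \<Rightarrow> real \<Rightarrow> 'a \<Rightarrow> nat \<Rightarrow> 'a measure" where
  "sgd_law K grad n data \<eta> Kc \<sigma> w0 t =
     distr (PiM UNIV (\<lambda>_::nat. gauss \<sigma>)) borel (sgd_iter K grad n data \<eta> Kc w0 t)"

definition couplings :: "'a::euclidean_space measure \<Rightarrow> 'a measure \<Rightarrow> ('a \<times> 'a) measure set" where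
  "couplings \<mu> \<nu> = {\<gamma>. prob_space \<gamma> \<and> sets \<gamma> = sets (borel \<Otimes>\<^sub>M borel)
                      \<and> distr \<gamma> borel fst = \<mu> \<and> distr \<gamma> borel snd = \<nu>}"

definition W_inf :: "'a::euclidean_space measure \<Rightarrow> 'a measure \<Rightarrow> ereal" where
  "W_inf \<mu> \<nu> = (INF \<gamma>\<in>couplings \<mu> \<nu>. esssup \<gamma> (\<lambda>p. ereal (norm (fst p - snd p))))"

definition hoelder_on :: "'a::real_normed_vector set \<Rightarrow> real \<Rightarrow> real \<Rightarrow> ('a \<Rightarrow> 'b::real_normed_vector) \<Rightarrow> bool" where
  "hoelder_on S L \<alpha> f \<longleftrightarrow> (\<forall>w\<in>S. \<forall>w'\<in>S. norm (f w - f w') \<le> L * norm (w - w') powr \<alpha>)"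

definition gfun :: "real \<Rightarrow> real \<Rightarrow> real \<Rightarrow> real" where
  "gfun \<alpha> x M = x + M * x powr \<alpha>"

primrec Dseq :: "real \<Rightarrow> real \<Rightarrow> real \<Rightarrow> real \<Rightarrow> nat \<Rightarrow> nat \<Rightarrow> real" where
  "Dseq \<eta> L \<alpha> Kc n 0 = 0"
| "Dseq \<eta> L \<alpha> Kc n (Suc t) =
     min (gfun \<alpha> (Dseq \<eta> L \<alpha> Kc n t) (\<eta> * L) + 2 * \<eta> * Kc / real n)
         (Dseq \<eta> L \<alpha> Kc n t + 2 * \<eta> * Kc)"

end

theory Submission
  imports Defs
begin

text \<open>Run the two chains on the same noise realisation (the synchronous coupling). The
  projection onto \<open>K\<close> and the clipping map are nonexpansive, so one step adds to the current
  distance \<open>d\<close> at most \<open>\<eta>/n\<close> times the distance of the summed clipped gradients. In that sum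
  the \<open>n - 1\<close> common samples contribute at most \<open>L d\<^sup>\<lambda>\<close> each by Hoelder continuity and the
  differing sample at most \<open>2K\<close>; alternatively every term is at most \<open>2K\<close>. This gives the
  recursion for \<open>D\<^sub>t\<close>, and after the first step both iterates lie in \<open>K\<close>, so their distance
  is also at most the diameter. A pointwise bound under a coupling bounds \<open>W\<^sub>\<infinity>\<close>.\<close>

lemma clip_eq_closest_point_cball:
  fixes v :: "'a::euclidean_space"
  assumes "Kc \<ge> 0"
  shows "clip Kc v = closest_point (cball 0 Kc) v"
proof (cases "norm v \<le> Kc")
  case True
  then have "clip Kc v = v"
    unfolding clip_def using assms by (cases "v = 0") (auto simp: min_def field_simps)
  then show ?thesis
    using True by (simp add: closest_point_self)
next
  case False
  then have v_pos: "norm v > 0"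
    using assms by auto
  have clip_v: "clip Kc v = (Kc / norm v) *\<^sub>R v"
    unfolding clip_def using False v_pos by (auto simp: min_def field_simps)
  show ?thesis
  proof (rule closest_point_unique)
    show "clip Kc v \<in> cball 0 Kc"
      using v_pos assms by (simp add: clip_v)
    have "v - clip Kc v = (1 - Kc / norm v) *\<^sub>R v"
      by (simp add: clip_v algebra_simps)
    moreover have "0 \<le> 1 - Kc / norm v"
      using v_pos False by (simp add: field_simps)
    ultimately have "dist v (clip Kc v) = (1 - Kc / norm v) * norm v"
      by (simp add: dist_norm)
    also have "\<dots> = norm v - Kc"
      using v_pos by (simp add: field_simps)
    finally have dist_clip: "dist v (clip Kc v) = norm v - Kc" .
    show "\<forall>z\<in>cball 0 Kc. dist v (clip Kc v) \<le> dist v z"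
    proof
      fix z :: 'a assume "z \<in> cball 0 Kc"
      then show "dist v (clip Kc v) \<le> dist v z"
        using norm_triangle_ineq2[of v z] dist_clip by (simp add: dist_norm)
    qed
  qed auto
qed

lemma norm_clip_le:
  fixes v :: "'a::euclidean_space"
  assumes "Kc \<ge> 0"
  shows "norm (clip Kc v) \<le> Kc"
  using closest_point_in_set[of "cball (0::'a) Kc" v] assms
  by (simp add: clip_eq_closest_point_cball)

lemma norm_clip_diff_le:
  fixes v w :: "'a::euclidean_space"
  assumes "Kc \<ge> 0"
  shows "norm (clip Kc v - clip Kc w) \<le> norm (v - w)"
  using closest_point_lipschitz[of "cball (0::'a) Kc" v w] assms
  by (simp add: clip_eq_closest_point_cball dist_norm)

lemma continuous_on_clip:
  assumes "Kc \<ge> 0"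
  shows "continuous_on S (clip Kc :: 'a::euclidean_space \<Rightarrow> 'a)"
  using continuous_on_closest_point[of "cball (0::'a) Kc" S] assms
  by (simp add: clip_eq_closest_point_cball[OF assms, abs_def])

lemma norm_sum_clip_diff_le:
  fixes u v :: "nat \<Rightarrow> 'a::euclidean_space"
  assumes Kc: "Kc \<ge> 0" and \<delta>: "\<delta> \<ge> 0" and j: "j < n"
    and close: "\<And>i. i < n \<Longrightarrow> i \<noteq> j \<Longrightarrow> norm (u i - v i) \<le> \<delta>"
  shows "norm ((\<Sum>i<n. clip Kc (u i)) - (\<Sum>i<n. clip Kc (v i)))
           \<le> min (2 * Kc + real n * \<delta>) (real n * (2 * Kc))"
proof -
  define e where "e i = norm (clip Kc (u i) - clip Kc (v i))" for i
  have e_le_2Kc: "e i \<le> 2 * Kc" for i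
    using norm_triangle_ineq4[of "clip Kc (u i)" "clip Kc (v i)"]
      norm_clip_le[OF Kc, of "u i"] norm_clip_le[OF Kc, of "v i"]
    unfolding e_def by linarith
  have e_le: "e i \<le> (if i = j then 2 * Kc else 0) + \<delta>" if "i < n" for i
    using e_le_2Kc[of i] \<delta> close[OF that] norm_clip_diff_le[OF Kc, of "u i" "v i"]
    unfolding e_def by auto
  have "norm ((\<Sum>i<n. clip Kc (u i)) - (\<Sum>i<n. clip Kc (v i))) \<le> (\<Sum>i<n. e i)"
    unfolding e_def sum_subtractf[symmetric] by (rule norm_sum)
  moreover have "(\<Sum>i<n. e i) \<le> (\<Sum>i<n. (if i = j then 2 * Kc else 0) + \<delta>)"
    using e_le by (intro sum_mono) auto
  moreover have "(\<Sum>i<n. e i) \<le> (\<Sum>i<n. 2 * Kc)"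
    using e_le_2Kc by (intro sum_mono) auto
  ultimately show ?thesis
    using j by (simp add: sum.distrib)
qed

lemma norm_sgd_step_diff_le:
  fixes K :: "'a::euclidean_space set" and grad :: "'x \<Rightarrow> 'a \<Rightarrow> 'a"
  assumes K: "K \<noteq> {}" "closed K" "convex K"
    and Kc: "Kc \<ge> 0" and \<eta>: "\<eta> \<ge> 0" and n: "n \<ge> 1" and L: "L \<ge> 0"
    and j: "j < n" and same: "\<forall>i<n. i \<noteq> j \<longrightarrow> data i = data' i"
    and hoelder_at: "\<And>i. i < n \<Longrightarrow>
        norm (grad (data i) w - grad (data i) w') \<le> L * norm (w - w') powr \<alpha>"
  shows "norm (sgd_step K grad n data \<eta> Kc w g - sgd_step K grad n data' \<eta> Kc w' g)
     \<le> min (gfun \<alpha> (norm (w - w')) (\<eta> * L) + 2 * \<eta> * Kc / real n) (norm (w - w') + 2 * \<eta> * Kc)"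
proof -
  define d where "d = norm (w - w')"
  define S where "S = (\<Sum>i<n. clip Kc (grad (data i) w))"
  define S' where "S' = (\<Sum>i<n. clip Kc (grad (data' i) w'))"
  have n_pos: "real n > 0"
    using n by simp
  have "norm (sgd_step K grad n data \<eta> Kc w g - sgd_step K grad n data' \<eta> Kc w' g)
      \<le> norm ((w - \<eta> *\<^sub>R ((1 / real n) *\<^sub>R S) + g) - (w' - \<eta> *\<^sub>R ((1 / real n) *\<^sub>R S') + g))"
    using closest_point_lipschitz[OF K(3,2,1)]
    unfolding sgd_step_def S_def S'_def dist_norm by blast
  also have "\<dots> = norm ((w - w') - (\<eta> / real n) *\<^sub>R (S - S'))"
    by (simp add: algebra_simps)
  also have "\<dots> \<le> d + (\<eta> / real n) * norm (S - S')"
    using norm_triangle_ineq4[of "w - w'" "(\<eta> / real n) *\<^sub>R (S - S')"] \<eta> n_pos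
    by (simp add: d_def)
  finally have step: "norm (sgd_step K grad n data \<eta> Kc w g - sgd_step K grad n data' \<eta> Kc w' g)
      \<le> d + (\<eta> / real n) * norm (S - S')" .
  have "norm (S - S') \<le> min (2 * Kc + real n * (L * d powr \<alpha>)) (real n * (2 * Kc))"
    unfolding S_def S'_def
  proof (rule norm_sum_clip_diff_le[OF Kc _ j])
    fix i assume "i < n" "i \<noteq> j"
    then show "norm (grad (data i) w - grad (data' i) w') \<le> L * d powr \<alpha>"
      using hoelder_at same unfolding d_def by metis
  qed (use L in simp)
  then have "(\<eta> / real n) * norm (S - S')
      \<le> (\<eta> / real n) * min (2 * Kc + real n * (L * d powr \<alpha>)) (real n * (2 * Kc))"
    using \<eta> n_pos by (intro mult_left_mono) auto
  also have "\<dots> = min (\<eta> * L * d powr \<alpha> + 2 * \<eta> * Kc / real n) (2 * \<eta> * Kc)"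
    using \<eta> n_pos by (simp add: min_mult_distrib_left field_simps)
  finally show ?thesis
    using step by (simp add: gfun_def d_def)
qed

lemma gfun_mono:
  assumes "0 \<le> x" "x \<le> y" "M \<ge> 0" "\<alpha> > 0"
  shows "gfun \<alpha> x M \<le> gfun \<alpha> y M"
  unfolding gfun_def using powr_mono2[of \<alpha> x y] assms
  by (simp add: add_mono mult_left_mono)

lemma sgd_step_in:
  assumes "K \<noteq> {}" "closed K"
  shows "sgd_step K grad n data \<eta> Kc w g \<in> K"
  by (simp add: sgd_step_def closest_point_in_set assms)

lemma norm_sgd_iter_diff_le_diameter:
  assumes "K \<noteq> {}" "closed K" "bounded K"
  shows "norm (sgd_iter K grad n data \<eta> Kc w0 t \<omega> - sgd_iter K grad' n' data' \<eta>' Kc' w0 t \<omega>)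
      \<le> diameter K"
proof (cases t)
  case 0
  then show ?thesis using diameter_ge_0[OF assms(3)] by simp
next
  case (Suc m)
  then show ?thesis
    using diameter_bounded_bound[OF assms(3) sgd_step_in[OF assms(1,2)] sgd_step_in[OF assms(1,2)]]
    by (simp add: dist_norm)
qed

lemma norm_sgd_iter_diff_le_Dseq:
  fixes K :: "'a::euclidean_space set" and grad :: "'x \<Rightarrow> 'a \<Rightarrow> 'a"
  assumes K: "K \<noteq> {}" "closed K" "convex K"
    and Kc: "Kc \<ge> 0" and \<eta>: "\<eta> \<ge> 0" and n: "n \<ge> 1" and L: "L \<ge> 0" and \<alpha>: "\<alpha> > 0"
    and j: "j < n" and same: "\<forall>i<n. i \<noteq> j \<longrightarrow> data i = data' i"
    and hoelder: "\<And>i. i < n \<Longrightarrow> hoelder_on K L \<alpha> (grad (data i))"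
  shows "norm (sgd_iter K grad n data \<eta> Kc w0 t \<omega> - sgd_iter K grad n data' \<eta> Kc w0 t \<omega>)
      \<le> Dseq \<eta> L \<alpha> Kc n t"
proof (induction t)
  case 0
  then show ?case by simp
next
  case (Suc t)
  let ?w = "sgd_iter K grad n data \<eta> Kc w0 t \<omega>"
  let ?w' = "sgd_iter K grad n data' \<eta> Kc w0 t \<omega>"
  have hoelder_at: "norm (grad (data i) ?w - grad (data i) ?w') \<le> L * norm (?w - ?w') powr \<alpha>"
    if "i < n" for i
  proof (cases t)
    case 0
    \<comment> \<open>both chains start at \<open>w0\<close>, which need not lie in \<open>K\<close>\<close>
    then show ?thesis using L by simp
  next
    case (Suc m)
    then have "?w \<in> K" "?w' \<in> K"
      using sgd_step_in[OF K(1,2)] by simp_all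
    then show ?thesis
      using hoelder[OF that] unfolding hoelder_on_def by blast
  qed
  have "norm (sgd_iter K grad n data \<eta> Kc w0 (Suc t) \<omega> - sgd_iter K grad n data' \<eta> Kc w0 (Suc t) \<omega>)
     \<le> min (gfun \<alpha> (norm (?w - ?w')) (\<eta> * L) + 2 * \<eta> * Kc / real n) (norm (?w - ?w') + 2 * \<eta> * Kc)"
    using norm_sgd_step_diff_le[where grad=grad and data=data and data'=data',
        OF K Kc \<eta> n L j same hoelder_at]
    by simp
  also have "\<dots> \<le> Dseq \<eta> L \<alpha> Kc n (Suc t)"
    using gfun_mono[OF norm_ge_zero Suc.IH _ \<alpha>, of "\<eta> * L"] Suc.IH \<eta> L
    by (auto simp: min_def)
  finally show ?case .
qed

lemma continuous_on_hoelder_on: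
  fixes f :: "'a::real_normed_vector \<Rightarrow> 'b::real_normed_vector"
  assumes h: "hoelder_on K L \<alpha> f" and \<alpha>: "\<alpha> > 0"
  shows "continuous_on K f"
  unfolding continuous_on_def
proof (intro ballI)
  fix x assume x: "x \<in> K"
  have "((\<lambda>y. f y - f x) \<longlongrightarrow> 0) (at x within K)"
  proof (rule Lim_null_comparison)
    show "\<forall>\<^sub>F y in at x within K. norm (f y - f x) \<le> L * norm (y - x) powr \<alpha>"
      using h x unfolding hoelder_on_def by (auto simp: eventually_at_filter)
    have "((\<lambda>y. norm (y - x) powr \<alpha>) \<longlongrightarrow> 0) (at x within K)"
      by (rule tendsto_zero_powrI) (auto intro!: tendsto_eq_intros \<alpha>)
    then show "((\<lambda>y. L * norm (y - x) powr \<alpha>) \<longlongrightarrow> 0) (at x within K)"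
      using tendsto_mult_left[of _ 0 _ L] by fastforce
  qed
  then show "(f \<longlongrightarrow> f x) (at x within K)"
    by (simp add: LIM_zero_iff)
qed

lemma borel_measurable_continuous_on_comp:
  assumes f: "continuous_on S f" and X: "X \<in> borel_measurable M"
    and X_in: "\<And>\<omega>. \<omega> \<in> space M \<Longrightarrow> X \<omega> \<in> S"
  shows "(\<lambda>\<omega>. f (X \<omega>)) \<in> borel_measurable M"
proof -
  have "X \<in> M \<rightarrow>\<^sub>M restrict_space borel S"
    using X X_in by (intro measurable_restrict_space2) auto
  then show ?thesis
    using measurable_comp[OF _ borel_measurable_continuous_on_restrict[OF f]] by (simp add: comp_def)
qed

lemma borel_measurable_sgd_iter:
  fixes K :: "'a::euclidean_space set" and grad :: "'x \<Rightarrow> 'a \<Rightarrow> 'a"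
  assumes K: "K \<noteq> {}" "closed K" "convex K" and Kc: "Kc \<ge> 0"
    and cont: "\<And>i. i < n \<Longrightarrow> continuous_on K (grad (data i))"
    and sets_M: "\<And>i. sets (M i) = sets borel"
  shows "sgd_iter K grad n data \<eta> Kc w0 t \<in> borel_measurable (PiM UNIV M)"
proof (induction t)
  case 0
  then show ?case by simp
next
  case (Suc t)
  define drift where
    "drift w = w - \<eta> *\<^sub>R ((1 / real n) *\<^sub>R (\<Sum>i<n. clip Kc (grad (data i) w)))" for w
  have "continuous_on K drift"
    unfolding drift_def
  proof (intro continuous_on_diff continuous_on_id continuous_on_scaleR continuous_on_const
      continuous_on_sum)
    fix i assume "i \<in> {..<n}"
    then show "continuous_on K (\<lambda>w. clip Kc (grad (data i) w))"
      by (intro continuous_on_compose2[OF continuous_on_clip[OF Kc] cont[of i]]) auto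
  qed
  note IH = Suc.IH
  have drift_meas:
    "(\<lambda>\<omega>. drift (sgd_iter K grad n data \<eta> Kc w0 t \<omega>)) \<in> borel_measurable (PiM UNIV M)"
  proof (cases t)
    case 0
    then show ?thesis by simp
  next
    case (Suc m)
    show ?thesis
      by (rule borel_measurable_continuous_on_comp[OF \<open>continuous_on K drift\<close> IH])
        (simp add: Suc sgd_step_in[OF K(1,2)])
  qed
  have noise_meas: "(\<lambda>\<omega>. \<omega> t) \<in> borel_measurable (PiM UNIV M)"
    using measurable_component_singleton[of t UNIV M]
      measurable_cong_sets[OF refl sets_M[of t], of "PiM UNIV M"]
    by simp
  have "sgd_iter K grad n data \<eta> Kc w0 (Suc t)
      = (\<lambda>\<omega>. closest_point K (drift (sgd_iter K grad n data \<eta> Kc w0 t \<omega>) + \<omega> t))"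
    by (simp add: sgd_step_def drift_def fun_eq_iff)
  also have "\<dots> \<in> borel_measurable (PiM UNIV M)"
    by (rule borel_measurable_continuous_on[OF continuous_on_closest_point[OF K(3,2,1)]
          borel_measurable_add[OF drift_meas noise_meas]])
  finally show ?case .
qed

lemma prob_space_gauss: "\<sigma> > 0 \<Longrightarrow> prob_space (gauss \<sigma> :: 'a::euclidean_space measure)"
  unfolding gauss_def
  by (intro prob_space.prob_space_distr prob_space_PiM prob_space_normal_density) auto

lemma W_inf_distr_le:
  fixes X Y :: "'b \<Rightarrow> 'a::euclidean_space"
  assumes P: "prob_space P" and X: "X \<in> borel_measurable P" and Y: "Y \<in> borel_measurable P"
    and close: "\<And>\<omega>. \<omega> \<in> space P \<Longrightarrow> norm (X \<omega> - Y \<omega>) \<le> c"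
  shows "W_inf (distr P borel X) (distr P borel Y) \<le> ereal c"
proof -
  define \<gamma> where "\<gamma> = distr P (borel \<Otimes>\<^sub>M borel) (\<lambda>\<omega>. (X \<omega>, Y \<omega>))"
  have XY: "(\<lambda>\<omega>. (X \<omega>, Y \<omega>)) \<in> P \<rightarrow>\<^sub>M (borel \<Otimes>\<^sub>M borel)"
    using X Y by (rule measurable_Pair)
  have "\<gamma> \<in> couplings (distr P borel X) (distr P borel Y)"
    unfolding couplings_def \<gamma>_def
    using prob_space.prob_space_distr[OF P XY]
    by (simp add: distr_distr[OF measurable_fst XY] distr_distr[OF measurable_snd XY] comp_def)
  moreover have "esssup \<gamma> (\<lambda>p. ereal (norm (fst p - snd p))) \<le> ereal c"
  proof (rule esssup_I)
    show "(\<lambda>p. ereal (norm (fst p - snd p))) \<in> borel_measurable \<gamma>"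
      unfolding \<gamma>_def by measurable
    show "AE p in \<gamma>. ereal (norm (fst p - snd p)) \<le> ereal c"
      unfolding \<gamma>_def using close by (subst AE_distr_iff[OF XY]) auto
  qed
  ultimately show ?thesis
    unfolding W_inf_def by (meson INF_lower order_trans)
qed

theorem mainTheorem10:
  fixes K :: "'a::euclidean_space set" and D :: real
    and loss :: "'a \<Rightarrow> 'x \<Rightarrow> real" and grad :: "'x \<Rightarrow> 'a \<Rightarrow> 'a"
    and n :: nat and data data' :: "nat \<Rightarrow> 'x"
    and \<eta> Kc \<sigma> L \<alpha> :: real and w0 :: 'a and t :: nat
  assumes K_ne: "K \<noteq> {}" and K_closed: "closed K" and K_convex: "convex K"
    and K_bdd: "bounded K" and D_def: "D = diameter K"
    and grad_loss: "\<And>x w. w \<in> K \<Longrightarrow>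
        ((\<lambda>v. loss v x) has_derivative (\<lambda>h. grad x w \<bullet> h)) (at w within K)"
    and n_pos: "n \<ge> 1"
    and adjacent: "\<exists>j<n. data j \<noteq> data' j \<and> (\<forall>i<n. i \<noteq> j \<longrightarrow> data i = data' i)"
    and hoelder: "\<And>i. i < n \<Longrightarrow> hoelder_on K L \<alpha> (grad (data i))"
    and hoelder': "\<And>i. i < n \<Longrightarrow> hoelder_on K L \<alpha> (grad (data' i))"
    and L_nonneg: "L \<ge> 0" and lam: "0 < \<alpha>" "\<alpha> \<le> 1"
    and eta_nonneg: "\<eta> \<ge> 0" and Kc_nonneg: "Kc \<ge> 0" and sigma_pos: "\<sigma> > 0"
  shows "W_inf (sgd_law K grad n data \<eta> Kc \<sigma> w0 t) (sgd_law K grad n data' \<eta> Kc \<sigma> w0 t)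
           \<le> ereal (min (Dseq \<eta> L \<alpha> Kc n t) D)"
proof -
  obtain j where j: "j < n" and same: "\<forall>i<n. i \<noteq> j \<longrightarrow> data i = data' i"
    using adjacent by blast
  let ?W = "sgd_iter K grad n data \<eta> Kc w0 t" and ?W' = "sgd_iter K grad n data' \<eta> Kc w0 t"
  have sets_gauss: "sets (gauss \<sigma> :: 'a measure) = sets borel"
    by (simp add: gauss_def)
  have le_D: "norm (?W \<omega> - ?W' \<omega>) \<le> D" for \<omega>
    unfolding D_def by (rule norm_sgd_iter_diff_le_diameter[OF K_ne K_closed K_bdd])
  have le_Dseq: "norm (?W \<omega> - ?W' \<omega>) \<le> Dseq \<eta> L \<alpha> Kc n t" for \<omega>
    by (rule norm_sgd_iter_diff_le_Dseq[where grad=grad, OF K_ne K_closed K_convex Kc_nonneg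
          eta_nonneg n_pos L_nonneg lam(1) j same hoelder])
  have meas: "sgd_iter K grad n dat \<eta> Kc w0 t \<in> borel_measurable (PiM UNIV (\<lambda>_. gauss \<sigma>))"
    if "\<And>i. i < n \<Longrightarrow> hoelder_on K L \<alpha> (grad (dat i))" for dat
    using borel_measurable_sgd_iter[where grad=grad and data=dat and M="\<lambda>_. gauss \<sigma>",
        OF K_ne K_closed K_convex Kc_nonneg continuous_on_hoelder_on[OF that lam(1)] sets_gauss] .
  show ?thesis
    unfolding sgd_law_def
    using W_inf_distr_le[OF prob_space_PiM[OF prob_space_gauss[OF sigma_pos]]
        meas[OF hoelder] meas[OF hoelder']] le_D le_Dseq
    by simp
qed

end
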